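(* Let $C\subseteq\{0,1\}^n$ be a maximum class with corner-peeling ordering $v_1,\dots,v_{|C|}$, and let $r(v_t)$ be the set of colors of the edges incident to $v_t$ in $\Gamma(C_{t-1})$ (the corner-peeling unlabeled compression scheme). Orient each edge of $\Gamma(C)$ of color $i$ away from its endpoint $u$ with $i\in r(u)$. Then the resulting directed graph has no directed cycle, i.e., every corner-peeling unlabeled compression scheme is acyclic.
   Context: For $C\subseteq\{0,1\}^n$, $C$ is maximum if $|C|=\sum_{i=0}^{\mathrm{VC}(C)}\binom{n}{i}$, where $\mathrm{VC}(C)$ is the VC-dimension. The one-inclusion graph $\Gamma(C)$ has vertex set $C$, with an edge between vertices differing in exactly one coordinate, colored by that coordinate. A $k$-cube in $C$ is a set of $2^k$ points of $C$ agreeing outside some $k$ coordinates and taking all values on them. A corner-peeling ordering is an ordering $v_1,\dots,v_{|C|}$ of $C$ such that, with $C_0=C$ and $C_t=C_{t-1}\setminus\{v_t\}$, for each $t$ there is a unique cube $C'_{t-1}$ of maximum dimension among cubes in $C_{t-1}$ containing $v_t$, and all neighbours of $v_t$ in $\Gamma(C_{t-1})$ lie in $C'_{t-1}$. *)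

theory Defs
  imports Main
begin

text \<open>A point of {0,1}^n is represented by its support, a subset of {..<n}:
  coordinate i of x is 1 iff i is in x.  A class is a set of such points.\<close>

definition symdiff :: "nat set \<Rightarrow> nat set \<Rightarrow> nat set" where
  "symdiff u w = (u - w) \<union> (w - u)"

definition oig_edge :: "nat set \<Rightarrow> nat set \<Rightarrow> nat \<Rightarrow> bool" where
  "oig_edge u w i \<longleftrightarrow> symdiff u w = {i}"

definition shatters :: "nat set set \<Rightarrow> nat set \<Rightarrow> bool" where
  "shatters C S \<longleftrightarrow> (\<forall>T\<subseteq>S. \<exists>c\<in>C. c \<inter> S = T)"

definition vc_dim :: "nat \<Rightarrow> nat set set \<Rightarrow> nat" where
  "vc_dim n C = Max {card S | S. S \<subseteq> {..<n} \<and> shatters C S}"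

definition maximum_class :: "nat \<Rightarrow> nat set set \<Rightarrow> bool" where
  "maximum_class n C \<longleftrightarrow> C \<subseteq> Pow {..<n} \<and> card C = (\<Sum>i\<le>vc_dim n C. n choose i)"

definition is_cube :: "nat \<Rightarrow> nat set set \<Rightarrow> nat set set \<Rightarrow> nat set \<Rightarrow> bool" where
  "is_cube n D Q K \<longleftrightarrow> K \<subseteq> {..<n} \<and> Q \<subseteq> D \<and>
     (\<exists>x. x \<subseteq> {..<n} \<and> Q = {(x - K) \<union> T | T. T \<subseteq> K})"

definition is_corner :: "nat \<Rightarrow> nat set set \<Rightarrow> nat set \<Rightarrow> bool" where
  "is_corner n D v \<longleftrightarrow>
     (\<exists>Q K. is_cube n D Q K \<and> v \<in> Q \<and>
        (\<forall>Q' K'. is_cube n D Q' K' \<and> v \<in> Q' \<longrightarrow>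
            card K' \<le> card K \<and> (card K' = card K \<longrightarrow> Q' = Q)) \<and>
        (\<forall>w\<in>D. \<forall>i. oig_edge v w i \<longrightarrow> w \<in> Q))"

text \<open>Corner-peeling ordering vs of C (0-indexed): C_t = C minus the first t elements.\<close>
definition corner_peeling :: "nat \<Rightarrow> nat set set \<Rightarrow> nat set list \<Rightarrow> bool" where
  "corner_peeling n C vs \<longleftrightarrow> distinct vs \<and> set vs = C \<and>
     (\<forall>t<length vs. is_corner n (C - set (take t vs)) (vs ! t))"

definition cp_r :: "nat set set \<Rightarrow> nat set list \<Rightarrow> nat set \<Rightarrow> nat set" where
  "cp_r C vs u = {i. \<exists>t<length vs. vs ! t = u \<and>
                       (\<exists>w\<in>C - set (take t vs). oig_edge u w i)}"

definition cp_orientation :: "nat set set \<Rightarrow> nat set list \<Rightarrow> (nat set \<times> nat set) set" where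
  "cp_orientation C vs = {(u, w). u \<in> C \<and> w \<in> C \<and>
                            (\<exists>i. oig_edge u w i \<and> i \<in> cp_r C vs u)}"

end

theory Submission
  imports Defs
begin

text \<open>When u is peeled, r(u) only records colours of edges towards points that are still
  present, i.e. peeled later; by uniqueness of the neighbour of u in a given colour, every arc
  of the orientation therefore points forward in the peeling order, and a relation whose arcs
  all go forward along a list of distinct elements is acyclic.\<close>

lemma oig_edge_unique:
  assumes "oig_edge u w i" and "oig_edge u w' i"
  shows "w' = w"
proof -
  from assms have "symdiff u w' = symdiff u w" by (simp add: oig_edge_def)
  then show ?thesis unfolding symdiff_def by blast
qed

lemma acyclic_if_forward_in_list:
  assumes "distinct xs"
    and forward: "\<And>x y. (x, y) \<in> R \<Longrightarrow>
      \<exists>t s. t < s \<and> s < length xs \<and> xs ! t = x \<and> xs ! s = y"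
  shows "acyclic R"
proof -
  define pos where "pos x = (THE t. t < length xs \<and> xs ! t = x)" for x
  have pos_nth: "pos (xs ! t) = t" if "t < length xs" for t
    unfolding pos_def using that assms(1) by (auto intro!: the_equality simp: nth_eq_iff_index_eq)
  have "R \<subseteq> inv_image less_than pos"
  proof clarify
    fix x y assume "(x, y) \<in> R"
    with forward obtain t s where "t < s" "s < length xs" "xs ! t = x" "xs ! s = y" by blast
    then show "(x, y) \<in> inv_image less_than pos" by (auto simp: pos_nth)
  qed
  then have "wf R" by (rule wf_subset[rotated]) simp
  then show ?thesis by (rule wf_acyclic)
qed

lemma cp_orientation_forward:
  assumes "distinct vs" and "set vs = C" and "(u, w) \<in> cp_orientation C vs"
  shows "\<exists>t s. t < s \<and> s < length vs \<and> vs ! t = u \<and> vs ! s = w"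
proof -
  from assms(3) obtain i t w' where t: "t < length vs" "vs ! t = u"
    and w': "w' \<in> C - set (take t vs)" "oig_edge u w' i"
    and uw: "oig_edge u w i" and "w \<in> C"
    unfolding cp_orientation_def cp_r_def by blast
  from \<open>w \<in> C\<close> assms(2) obtain s where s: "s < length vs" "vs ! s = w"
    by (auto simp: in_set_conv_nth)
  have "w \<notin> set (take t vs)" using w' oig_edge_unique[OF uw w'(2)] by simp
  then have "\<not> s < t" using s t by (auto simp: in_set_conv_nth)
  moreover have "w \<noteq> u" using uw by (auto simp: oig_edge_def symdiff_def)
  then have "s \<noteq> t" using s t by auto
  ultimately show ?thesis using s t by (intro exI[of _ t] exI[of _ s]) simp
qed

theorem proposition1:
  fixes n :: nat and C :: "nat set set" and vs :: "nat set list"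
  assumes "maximum_class n C"
    and "corner_peeling n C vs"
  shows "acyclic (cp_orientation C vs)"
proof (rule acyclic_if_forward_in_list)
  show "distinct vs" using assms(2) by (simp add: corner_peeling_def)
  moreover have "set vs = C" using assms(2) by (simp add: corner_peeling_def)
  ultimately show "\<exists>t s. t < s \<and> s < length vs \<and> vs ! t = u \<and> vs ! s = w"
    if "(u, w) \<in> cp_orientation C vs" for u w
    using cp_orientation_forward that by blast
qed

end
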